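(* For $m\ge1$, $\beta\in\mathbb{R}$ and $x\in(0,1)$ let $$\mathcal{F}_m(x,\beta)=e^{m\pi ix}e^{-2\pi i\beta x}\frac{\sin^m\pi x}{\pi^{m-1}}\frac{d^{m-1}}{dx^{m-1}}\Big((i-\cot\pi x)e^{2\pi i\beta x}\Big).$$ Then $\mathcal{F}_m(x,\beta)=F_m(e^{i\pi x},\beta)$, where $F_m(u,\beta)$ are the polynomials in $u$ defined by $F_1(u,\beta)=-1$ and, for $m\ge2$, $$F_m(u,\beta)=\big(\beta(u^2-1)-(m-1)u^2\big)F_{m-1}(u,\beta)+\frac{u(u^2-1)}{2}\frac{\partial}{\partial u}F_{m-1}(u,\beta).$$ *)

theory Defs
  imports "HOL-Analysis.Analysis" "HOL-Computational_Algebra.Polynomial"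
begin

definition vderiv_iter :: "nat \<Rightarrow> (real \<Rightarrow> complex) \<Rightarrow> real \<Rightarrow> complex" where
  "vderiv_iter k f = ((\<lambda>g. \<lambda>t. vector_derivative g (at t)) ^^ k) f"

text \<open>The polynomials F_m(u, beta) in u; Fpoly m beta is F_m for m >= 1
  (the value at m = 0 is an unused dummy).\<close>
fun Fpoly :: "nat \<Rightarrow> real \<Rightarrow> complex poly" where
  "Fpoly 0 \<beta> = 0"
| "Fpoly (Suc 0) \<beta> = [:-1:]"
| "Fpoly (Suc (Suc n)) \<beta> =
     (smult (complex_of_real \<beta>) ([:-1, 0, 1:]) - smult (of_nat (Suc n)) [:0, 0, 1:])
       * Fpoly (Suc n) \<beta>
     + smult (1/2) [:0, -1, 0, 1:] * pderiv (Fpoly (Suc n) \<beta>)"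

definition calF :: "nat \<Rightarrow> real \<Rightarrow> real \<Rightarrow> complex" where
  "calF m x \<beta> =
     exp (of_nat m * pi * \<i> * x) * exp (- 2 * pi * \<i> * \<beta> * x)
     * (complex_of_real (sin (pi * x)) ^ m / complex_of_real (pi ^ (m - 1)))
     * vderiv_iter (m - 1)
         (\<lambda>t. (\<i> - complex_of_real (cot (pi * t))) * exp (2 * pi * \<i> * \<beta> * t)) x"

end

theory Submission
  imports Defs
begin

text \<open>With w = exp(i pi x) one has sin(pi x) = (w^2 - 1) / (2 i w) and
  i - cot(pi x) = -2i / (w^2 - 1). Differentiating exp(2 pi i beta x) P(w) / (w^2 - 1)^n gives a
  function of the same shape with n + 1 in place of n, the polynomial P being transformed by
  exactly the recursion defining F_m. Hence the k-th derivative of (i - cot(pi x)) exp(2 pi i beta x)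
  is 2i (2 pi i)^k exp(2 pi i beta x) F_(k+1)(w) / (w^2 - 1)^(k+1), and the prefactors in calF
  cancel everything but F_m(w).\<close>

lemma vderiv_iter_0 [simp]: "vderiv_iter 0 f = f"
  by (simp add: vderiv_iter_def)

lemma vderiv_iter_Suc: "vderiv_iter (Suc k) f t = vector_derivative (vderiv_iter k f) (at t)"
  by (simp add: vderiv_iter_def)

lemma vderiv_iter_eqI:
  assumes "open S" and "t \<in> S"
    and f: "\<And>t. t \<in> S \<Longrightarrow> f t = g 0 t"
    and g: "\<And>k t. t \<in> S \<Longrightarrow> (g k has_vector_derivative g (Suc k) t) (at t)"
  shows "vderiv_iter k f t = g k t"
  using \<open>t \<in> S\<close>
proof (induction k arbitrary: t)
  case 0
  then show ?case by (simp add: f)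
next
  case (Suc k)
  have "(vderiv_iter k f has_vector_derivative g (Suc k) t) (at t)"
    using has_vector_derivative_transform_within_open[OF g \<open>open S\<close>] Suc by metis
  then show ?case
    unfolding vderiv_iter_Suc by (rule vector_derivative_at)
qed

lemma sin_eq_exp_i: "sin z = ((exp (\<i> * z))\<^sup>2 - 1) / (2 * \<i> * exp (\<i> * z))"
  by (simp add: sin_exp_eq exp_minus field_simps power2_eq_square)

lemma cos_eq_exp_i: "cos z = ((exp (\<i> * z))\<^sup>2 + 1) / (2 * exp (\<i> * z))"
  by (simp add: cos_exp_eq exp_minus field_simps power2_eq_square)

lemma exp_i_power2_eq_1_iff: "(exp (\<i> * z))\<^sup>2 = 1 \<longleftrightarrow> sin z = 0"
  by (simp add: sin_eq_exp_i)

lemma i_minus_cot_eq: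
  assumes "sin z \<noteq> 0"
  shows "\<i> - cot z = - 2 * \<i> / ((exp (\<i> * z))\<^sup>2 - 1)"
proof -
  have "(exp (\<i> * z))\<^sup>2 - 1 \<noteq> 0"
    using assms exp_i_power2_eq_1_iff by simp
  then show ?thesis
    unfolding cot_def sin_eq_exp_i cos_eq_exp_i by (simp add: field_simps)
qed

lemma has_field_derivative_exp_poly_quotient:
  fixes p :: "complex poly" and \<beta> :: real and n :: nat and z w :: complex
  defines "w \<equiv> exp (\<i> * pi * z)"
  assumes "w\<^sup>2 \<noteq> 1"
  shows "((\<lambda>z. exp (2 * pi * \<i> * \<beta> * z) * poly p (exp (\<i> * pi * z)) / ((exp (\<i> * pi * z))\<^sup>2 - 1) ^ n)
      has_field_derivative
       2 * \<i> * pi * exp (2 * pi * \<i> * \<beta> * z)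
       * ((\<beta> * (w\<^sup>2 - 1) - n * w\<^sup>2) * poly p w + w * (w\<^sup>2 - 1) / 2 * poly (pderiv p) w)
       / (w\<^sup>2 - 1) ^ (n + 1)) (at z)"
proof -
  have A: "w\<^sup>2 - 1 \<noteq> 0"
    using assms(2) by simp
  have dw: "((\<lambda>z. exp (\<i> * pi * z)) has_field_derivative \<i> * pi * w) (at z)"
    unfolding w_def by (auto intro!: derivative_eq_intros)
  have dE: "((\<lambda>z. exp (2 * pi * \<i> * \<beta> * z)) has_field_derivative
      2 * pi * \<i> * \<beta> * exp (2 * pi * \<i> * \<beta> * z)) (at z)"
    by (auto intro!: derivative_eq_intros)
  have dP: "((\<lambda>z. poly p (exp (\<i> * pi * z))) has_field_derivative
      poly (pderiv p) w * (\<i> * pi * w)) (at z)"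
    unfolding w_def by (rule DERIV_chain2[OF poly_DERIV dw[unfolded w_def]])
  have "((\<lambda>z. ((exp (\<i> * pi * z))\<^sup>2 - 1) ^ n) has_field_derivative
      n * (w\<^sup>2 - 1) ^ (n - 1) * (2 * w * (\<i> * pi * w))) (at z)"
    unfolding w_def by (auto intro!: derivative_eq_intros dw[unfolded w_def])
  moreover have "n * (w\<^sup>2 - 1) ^ (n - 1) * (2 * w * (\<i> * pi * w))
      = 2 * \<i> * pi * n * w\<^sup>2 * (w\<^sup>2 - 1) ^ n / (w\<^sup>2 - 1)"
    using A by (cases n) (simp_all add: field_simps power2_eq_square)
  ultimately have dA: "((\<lambda>z. ((exp (\<i> * pi * z))\<^sup>2 - 1) ^ n) has_field_derivative
      2 * \<i> * pi * n * w\<^sup>2 * (w\<^sup>2 - 1) ^ n / (w\<^sup>2 - 1)) (at z)"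
    by simp
  show ?thesis
    by (rule DERIV_cong[OF DERIV_divide[OF DERIV_mult[OF dE dP] dA]])
      (use A in \<open>unfold w_def[symmetric], simp_all add: field_simps power2_eq_square\<close>)
qed

lemma poly_Fpoly_Suc_Suc:
  "poly (Fpoly (Suc (Suc k)) \<beta>) u =
     (\<beta> * (u\<^sup>2 - 1) - of_nat (Suc k) * u\<^sup>2) * poly (Fpoly (Suc k) \<beta>) u
     + u * (u\<^sup>2 - 1) / 2 * poly (pderiv (Fpoly (Suc k) \<beta>)) u"
  by (simp add: algebra_simps power2_eq_square) (simp add: field_simps)

lemma sin_pi_neq_0:
  assumes "0 < t" and "t < 1"
  shows "sin (pi * complex_of_real t) \<noteq> 0"
  using sin_gt_zero[of "pi * t"] assms unfolding of_real_mult[symmetric] sin_of_real by simp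

definition cot_exp_deriv :: "real \<Rightarrow> nat \<Rightarrow> complex \<Rightarrow> complex" where
  "cot_exp_deriv \<beta> k z = 2 * \<i> * (2 * \<i> * pi) ^ k
     * (exp (2 * pi * \<i> * \<beta> * z) * poly (Fpoly (Suc k) \<beta>) (exp (\<i> * pi * z))
        / ((exp (\<i> * pi * z))\<^sup>2 - 1) ^ Suc k)"

lemma has_field_derivative_cot_exp_deriv:
  assumes "(exp (\<i> * pi * z))\<^sup>2 \<noteq> 1"
  shows "(cot_exp_deriv \<beta> k has_field_derivative cot_exp_deriv \<beta> (Suc k) z) (at z)"
  unfolding cot_exp_deriv_def
  by (rule DERIV_cong[OF DERIV_cmult[OF has_field_derivative_exp_poly_quotient[OF assms]]])
    (simp only: poly_Fpoly_Suc_Suc, simp add: mult_ac)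

lemma vderiv_iter_cot_exp:
  assumes "0 < t" and "t < 1"
  shows "vderiv_iter k (\<lambda>t. (\<i> - complex_of_real (cot (pi * t))) * exp (2 * pi * \<i> * \<beta> * t)) t
    = cot_exp_deriv \<beta> k t"
proof -
  have sin_pi_t: "sin (pi * complex_of_real t) \<noteq> 0" if "t \<in> {0<..<1}" for t :: real
    using that sin_pi_neq_0 by simp
  show ?thesis
  proof (rule vderiv_iter_eqI[where S = "{0<..<1}" and g = "\<lambda>k t. cot_exp_deriv \<beta> k (of_real t)"])
    fix t :: real
    assume "t \<in> {0<..<1}"
    then show "(\<i> - complex_of_real (cot (pi * t))) * exp (2 * pi * \<i> * \<beta> * t) = cot_exp_deriv \<beta> 0 t"
      using i_minus_cot_eq[OF sin_pi_t] by (simp add: cot_exp_deriv_def cot_of_real mult.assoc)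
  next
    fix k and t :: real
    assume "t \<in> {0<..<1}"
    then have "(exp (\<i> * pi * t))\<^sup>2 \<noteq> 1"
      using sin_pi_t by (simp add: exp_i_power2_eq_1_iff mult.assoc)
    then show "((\<lambda>t. cot_exp_deriv \<beta> k (of_real t)) has_vector_derivative cot_exp_deriv \<beta> (Suc k) t) (at t)"
      by (intro has_vector_derivative_real_field has_field_derivative_cot_exp_deriv)
  qed (use assms in auto)
qed

theorem theorem4p4:
  fixes m :: nat and \<beta> x :: real
  assumes "m \<ge> 1" and "0 < x" and "x < 1"
  shows "calF m x \<beta> = poly (Fpoly m \<beta>) (exp (\<i> * pi * x))"
proof -
  obtain n where m: "m = Suc n"
    using assms(1) by (cases m) auto
  define w where "w = exp (\<i> * pi * x)"
  have sin: "complex_of_real (sin (pi * x)) = (w\<^sup>2 - 1) / (2 * \<i> * w)"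
    unfolding w_def sin_of_real[symmetric] sin_eq_exp_i by (simp add: mult.assoc)
  have "w\<^sup>2 - 1 \<noteq> 0"
    using sin_pi_neq_0[OF assms(2,3)] by (simp add: w_def exp_i_power2_eq_1_iff mult.assoc)
  moreover have "w \<noteq> 0"
    by (simp add: w_def)
  moreover have "exp (of_nat m * pi * \<i> * x) = w ^ m"
    unfolding w_def by (simp add: exp_of_nat_mult[symmetric] mult_ac)
  moreover have "exp (- 2 * pi * \<i> * \<beta> * x) * exp (2 * pi * \<i> * \<beta> * x) = 1"
    by (simp flip: exp_add)
  ultimately show ?thesis
    unfolding calF_def m diff_Suc_1 vderiv_iter_cot_exp[OF assms(2,3)] cot_exp_deriv_def
    unfolding sin w_def[symmetric]
    by (simp add: m field_simps power_mult_distrib power_divide)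
qed

end
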